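(* Let $N\ge3$ be odd, $l\in\{0,1\}$, and let $r\ge1$ be an integer with $r+l$ odd. Let $q$ be an integer with $0\le q\le (N-1)/2$, and set $h=2\pi/N$ and $\sigma_k(r)=[\sin(hk/2)/k]^{1+r}$. Define $C_k^{(l)}(r,N,j,t)$ and $H_k^{(l)}(r,N)$ as $$C_k^{(l)}(r,N,j,t)=\sigma_k(r)\cos k(t-t_j^{(l)})+\sum_{m=1}^{\infty}(-1)^{ml}\Bigl[\sigma_{mN+k}(r)\cos(mN+k)(t-t_j^{(l)})+\sigma_{mN-k}(r)\cos(mN-k)(t-t_j^{(l)})\Bigr],$$ $$H_k^{(l)}(r,N)=\sigma_k(r)+\sum_{m=1}^{\infty}(-1)^{ml}\bigl[\sigma_{mN+k}(r)+\sigma_{mN-k}(r)\bigr].$$ Define the fundamental trigonometric LS splines $$ts_{j,q}^{(l)}(r,t)=\frac1N\Bigl\{1+2\sum_{k=1}^{q}\frac{C_k^{(l)}(r,N,j,t)}{H_k^{(l)}(r,N)}\Bigr\},\qquad j=1,\dots,N,$$ and the fundamental trigonometric LS polynomials $$\varphi_{j,q}^{(l)}(t)=\frac1N\Bigl[1+2\sum_{k=1}^q\cos k(t-t_j^{(l)})\Bigr].$$ Then the following hold. 1. For all $i,j\in\{1,\dots,N\}$, $ts_{j,q}^{(l)}(r,t_i^{(l)})=\varphi_{j,q}^{(l)}(t_i^{(l)})$. 2. For any data $f_1,\dots,f_N$, the LS spline $Ts_{r,q}^{(l)}(t)=\sum_{j=1}^N f_j\,ts_{j,q}^{(l)}(r,t)$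 takes at each node $t_i^{(l)}$ the same value as the discrete least-squares trigonometric polynomial $T_q^{(l)}(t)=\sum_{j=1}^N f_j\varphi_{j,q}^{(l)}(t)$.
   Context: Uniform grids on $[0,2\pi]$: for $N$ odd and $j=1,\dots,N$, set $t_j^{(0)}=\frac{2\pi}{N}(j-1)$ and $t_j^{(1)}=\frac{\pi}{N}(2j-1)$. Under the hypothesis that $r+l$ is odd, all constants $H_k^{(l)}(r,N)$ are nonzero, so the definition of $ts_{j,q}^{(l)}$ makes sense. The polynomial $T_q^{(l)}$ coincides with the order-$q$ partial sum $\frac{a_0}{2}+\sum_{k=1}^q(a_k\cos kt+b_k\sin kt)$ of the discrete Fourier series, with coefficients $a_0=\frac2N\sum_j f_j$, $a_k=\frac2N\sum_j f_j\cos kt_j^{(l)}$, and $b_k=\frac2N\sum_j f_j\sin kt_j^{(l)}$. *)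

theory Defs
  imports Complex_Main
begin

definition node :: "nat \<Rightarrow> nat \<Rightarrow> nat \<Rightarrow> real" where
  "node l N j = (if l = 0 then 2 * pi / real N * (real j - 1)
                 else pi / real N * (2 * real j - 1))"

definition sigma :: "nat \<Rightarrow> nat \<Rightarrow> nat \<Rightarrow> real" where
  "sigma N r k = (sin (2 * pi / real N * real k / 2) / real k) ^ (1 + r)"

definition Ck :: "nat \<Rightarrow> nat \<Rightarrow> nat \<Rightarrow> nat \<Rightarrow> real \<Rightarrow> nat \<Rightarrow> real" where
  "Ck l r N j t k =
     sigma N r k * cos (real k * (t - node l N j)) +
     (\<Sum>m. (-1) ^ (Suc m * l) *
        (sigma N r (Suc m * N + k) * cos (real (Suc m * N + k) * (t - node l N j)) +
         sigma N r (Suc m * N - k) * cos (real (Suc m * N - k) * (t - node l N j))))"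

definition Hk :: "nat \<Rightarrow> nat \<Rightarrow> nat \<Rightarrow> nat \<Rightarrow> real" where
  "Hk l r N k =
     sigma N r k +
     (\<Sum>m. (-1) ^ (Suc m * l) * (sigma N r (Suc m * N + k) + sigma N r (Suc m * N - k)))"

definition ts :: "nat \<Rightarrow> nat \<Rightarrow> nat \<Rightarrow> nat \<Rightarrow> nat \<Rightarrow> real \<Rightarrow> real" where
  "ts l q r N j t = 1 / real N * (1 + 2 * (\<Sum>k = 1..q. Ck l r N j t k / Hk l r N k))"

definition phi :: "nat \<Rightarrow> nat \<Rightarrow> nat \<Rightarrow> nat \<Rightarrow> real \<Rightarrow> real" where
  "phi l q N j t = 1 / real N * (1 + 2 * (\<Sum>k = 1..q. cos (real k * (t - node l N j))))"

end

theory Submission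
  imports Defs "HOL-Analysis.Summation_Tests"
begin

text \<open>At the nodes the differences t_i - t_j are multiples of h = 2 pi / N, so the frequencies
mN + k and mN - k alias to k and C_k collapses to cos k(t_i - t_j) times H_k. It remains to see
that H_k is nonzero for 1 \<le> k < N/2. For l = 0 the exponent 1 + r is even and every term of H_k
is nonnegative. For l = 1 the exponent is odd; writing s = sin(pi k/N), the series becomes
(s/k)^(1+r) + sum over m \<ge> 1 of (s/(mN+k))^(1+r) - (s/(mN-k))^(1+r), and since
k < N - k and mN + k \<le> (m+1)N - k, each negative term is dominated by the positive term
before it.\<close>

lemma sin_add_pi_multiple: "sin (x + pi * real n) = (-1) ^ n * sin x"
  by (simp add: sin_add)

lemma cos_add_2pi_multiple: "cos (x + 2 * pi * of_int n) = cos x"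
  by (simp add: cos_add)

lemma cos_aliased_frequency:
  fixes d :: int
  assumes "0 < N"
  shows "cos (real (m * N + k) * (2 * pi / real N * of_int d)) = cos (real k * (2 * pi / real N * of_int d))"
    and "k \<le> m * N \<Longrightarrow>
      cos (real (m * N - k) * (2 * pi / real N * of_int d)) = cos (real k * (2 * pi / real N * of_int d))"
proof -
  have "real (m * N + k) * (2 * pi / real N * of_int d)
        = real k * (2 * pi / real N * of_int d) + 2 * pi * of_int (int m * d)"
    using assms by (simp add: field_simps)
  then show "cos (real (m * N + k) * (2 * pi / real N * of_int d)) = cos (real k * (2 * pi / real N * of_int d))"
    by (simp only: cos_add_2pi_multiple)
  assume "k \<le> m * N"
  then have "real (m * N - k) * (2 * pi / real N * of_int d)
        = - (real k * (2 * pi / real N * of_int d)) + 2 * pi * of_int (int m * d)"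
    using assms by (simp add: of_nat_diff field_simps)
  then show "cos (real (m * N - k) * (2 * pi / real N * of_int d)) = cos (real k * (2 * pi / real N * of_int d))"
    by (simp only: cos_add_2pi_multiple cos_minus)
qed

lemma node_diff:
  assumes "0 < N"
  shows "node l N i - node l N j = 2 * pi / real N * of_int (int i - int j)"
  using assms by (auto simp: node_def field_simps)

lemma summable_inverse_Suc_square: "summable (\<lambda>m. inverse (real (Suc m) ^ 2))"
  using inverse_power_summable[of 2, where 'a = real]
    summable_Suc_iff[of "\<lambda>n. inverse (real n ^ 2)"] by simp

lemma suminf_interlaced_pos:
  fixes u v :: "nat \<Rightarrow> real"
  assumes "summable u" "summable v" "u 0 < c" "\<And>m. u (Suc m) \<le> v m"
  shows "0 < c + (\<Sum>m. v m - u m)"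
proof -
  have su': "summable (\<lambda>m. u (Suc m))" using assms(1) summable_Suc_iff by blast
  have "(\<Sum>m. v m - u m) = suminf v - suminf u"
    using assms(2,1) by (rule suminf_diff[symmetric])
  also have "\<dots> = (\<Sum>m. v m - u (Suc m)) - u 0"
    using suminf_split_head[OF assms(1)] suminf_diff[OF assms(2) su'] by simp
  finally have "(\<Sum>m. v m - u m) = (\<Sum>m. v m - u (Suc m)) - u 0" .
  moreover have "0 \<le> (\<Sum>m. v m - u (Suc m))"
    using assms(4) by (intro suminf_nonneg summable_diff assms(2) su') auto
  ultimately show ?thesis using assms(3) by linarith
qed

lemma power_odd_sign:
  fixes x :: real
  assumes "odd p"
  shows "((-1) ^ n * x) ^ p = (-1) ^ n * x ^ p"
proof -
  have "((-1::real) ^ n) ^ p = (-1) ^ n"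
    using assms by (metis mult.commute power_mult power_minus_odd power_one)
  then show ?thesis by (simp add: power_mult_distrib)
qed

lemma abs_sigma_le:
  assumes "1 \<le> r" "Suc m \<le> n"
  shows "\<bar>sigma N r n\<bar> \<le> inverse (real (Suc m) ^ 2)"
proof -
  have "\<bar>sigma N r n\<bar> = (\<bar>sin (2 * pi / real N * real n / 2)\<bar> / real n) ^ (1 + r)"
    unfolding sigma_def power_abs abs_divide abs_of_nat ..
  also have "\<dots> \<le> (1 / real n) ^ (1 + r)"
    by (intro power_mono divide_right_mono) auto
  also have "\<dots> \<le> (1 / real n) ^ 2"
    using assms by (intro power_decreasing) auto
  also have "\<dots> \<le> (1 / real (Suc m)) ^ 2"
    using assms by (intro power_mono divide_left_mono) auto
  finally show ?thesis by (simp add: power_one_over inverse_eq_divide)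
qed

lemma Suc_le_aliased_frequencies:
  fixes N k m :: nat
  assumes "k < N"
  shows "Suc m \<le> Suc m * N + k" "Suc m \<le> Suc m * N - k"
proof -
  have "m \<le> m * N" using assms by simp
  moreover have "Suc m * N = N + m * N" by simp
  ultimately show "Suc m \<le> Suc m * N + k" "Suc m \<le> Suc m * N - k" using assms by linarith+
qed

lemma summable_Hk_series:
  assumes "1 \<le> r" "k < N"
  shows "summable (\<lambda>m. (-1::real) ^ (Suc m * l) *
           (sigma N r (Suc m * N + k) + sigma N r (Suc m * N - k)))"
proof (rule summable_comparison_test)
  show "summable (\<lambda>m. 2 * inverse (real (Suc m) ^ 2))"
    using summable_inverse_Suc_square by (rule summable_mult)
  show "\<exists>M. \<forall>m\<ge>M. norm ((-1::real) ^ (Suc m * l) *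
               (sigma N r (Suc m * N + k) + sigma N r (Suc m * N - k)))
             \<le> 2 * inverse (real (Suc m) ^ 2)"
  proof (intro exI allI impI)
    fix m
    have "\<bar>sigma N r (Suc m * N + k) + sigma N r (Suc m * N - k)\<bar>
          \<le> \<bar>sigma N r (Suc m * N + k)\<bar> + \<bar>sigma N r (Suc m * N - k)\<bar>"
      by (rule abs_triangle_ineq)
    then show "norm ((-1::real) ^ (Suc m * l) *
            (sigma N r (Suc m * N + k) + sigma N r (Suc m * N - k)))
          \<le> 2 * inverse (real (Suc m) ^ 2)"
      using abs_sigma_le[where N = N, OF assms(1) Suc_le_aliased_frequencies(1)[OF assms(2), of m]]
        abs_sigma_le[where N = N, OF assms(1) Suc_le_aliased_frequencies(2)[OF assms(2), of m]]
      by (simp add: abs_mult power_abs)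
  qed
qed

lemma Ck_node:
  assumes "1 \<le> r" "k < N"
  shows "Ck l r N j (node l N i) k = cos (real k * (node l N i - node l N j)) * Hk l r N k"
proof -
  define c where "c = cos (real k * (node l N i - node l N j))"
  have N: "0 < N" "\<And>m. k \<le> Suc m * N" using assms(2) by auto
  have "cos (real (Suc m * N + k) * (node l N i - node l N j)) = c"
       "cos (real (Suc m * N - k) * (node l N i - node l N j)) = c" for m
    unfolding c_def node_diff[OF N(1)]
    by (rule cos_aliased_frequency(1)[OF N(1)], rule cos_aliased_frequency(2)[OF N])
  then have series: "(\<lambda>m. (-1::real) ^ (Suc m * l) *
          (sigma N r (Suc m * N + k) * cos (real (Suc m * N + k) * (node l N i - node l N j)) +
           sigma N r (Suc m * N - k) * cos (real (Suc m * N - k) * (node l N i - node l N j))))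
        = (\<lambda>m. c * ((-1::real) ^ (Suc m * l) *
                 (sigma N r (Suc m * N + k) + sigma N r (Suc m * N - k))))"
    by (simp add: algebra_simps)
  show ?thesis
    unfolding Ck_def Hk_def series suminf_mult[OF summable_Hk_series[OF assms]]
    by (simp add: c_def algebra_simps)
qed

lemma sigma_add_multiple:
  assumes "0 < N"
  shows "sigma N r (m * N + k) = ((-1) ^ m * sin (pi * real k / real N) / real (m * N + k)) ^ (1 + r)"
proof -
  have "2 * pi / real N * real (m * N + k) / 2 = pi * real k / real N + pi * real m"
    using assms by (simp add: field_simps)
  then show ?thesis unfolding sigma_def by (simp only: sin_add_pi_multiple)
qed

lemma sigma_diff_multiple:
  assumes "0 < N" "k \<le> m * N"
  shows "sigma N r (m * N - k) = ((-1) ^ m * - sin (pi * real k / real N) / real (m * N - k)) ^ (1 + r)"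
proof -
  have "2 * pi / real N * real (m * N - k) / 2 = - (pi * real k / real N) + pi * real m"
    using assms by (simp add: of_nat_diff field_simps)
  then show ?thesis unfolding sigma_def by (simp only: sin_add_pi_multiple sin_minus)
qed

lemma sigma_eq_sin_div: "sigma N r k = (sin (pi * real k / real N) / real k) ^ (1 + r)"
  by (simp add: sigma_def)

lemma sigma_pos:
  assumes "0 < k" "k < N"
  shows "0 < sigma N r k"
proof -
  have "0 < sin (pi * real k / real N)"
    using assms by (intro sin_gt_zero) (auto simp: field_simps)
  then show ?thesis unfolding sigma_eq_sin_div using assms by simp
qed

lemma Hk_pos_even_exponent:
  assumes "odd r" "1 \<le> r" "0 < k" "k < N"
  shows "0 < Hk 0 r N k"
proof -
  have "0 \<le> sigma N r n" for n
    unfolding sigma_def using assms(1) by (intro zero_le_even_power) simp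
  then have "0 \<le> (\<Sum>m. (-1::real) ^ (Suc m * 0) *
                 (sigma N r (Suc m * N + k) + sigma N r (Suc m * N - k)))"
    by (intro suminf_nonneg summable_Hk_series assms) auto
  then show ?thesis unfolding Hk_def using sigma_pos[OF assms(3,4), where r = r] by linarith
qed

lemma Hk_pos_odd_exponent:
  assumes "even r" "1 \<le> r" "0 < k" "2 * k < N"
  shows "0 < Hk 1 r N k"
proof -
  define s where "s = sin (pi * real k / real N)"
  define u where "u m = (s / real (Suc m * N - k)) ^ (1 + r)" for m
  define v where "v m = (s / real (Suc m * N + k)) ^ (1 + r)" for m
  have odd: "odd (1 + r)" using assms(1) by simp
  have N: "0 < N" "k < N" using assms by auto
  have s_pos: "0 < s"
    unfolding s_def using assms by (intro sin_gt_zero) (auto simp: field_simps)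
  have sigma_plus: "sigma N r (Suc m * N + k) = (-1) ^ Suc m * v m" for m
  proof -
    have "sigma N r (Suc m * N + k) = ((-1) ^ Suc m * (s / real (Suc m * N + k))) ^ (1 + r)"
      unfolding sigma_add_multiple[OF N(1)] s_def by simp
    then show ?thesis unfolding v_def by (simp only: power_odd_sign[OF odd])
  qed
  have sigma_minus: "sigma N r (Suc m * N - k) = (-1) ^ m * u m" for m
  proof -
    have k_le: "k \<le> Suc m * N" using N(2) by simp
    have "sigma N r (Suc m * N - k) = ((-1) ^ m * (s / real (Suc m * N - k))) ^ (1 + r)"
      unfolding sigma_diff_multiple[OF N(1) k_le] s_def by simp
    then show ?thesis unfolding u_def by (simp only: power_odd_sign[OF odd])
  qed
  have terms: "(-1::real) ^ (Suc m * 1) * (sigma N r (Suc m * N + k) + sigma N r (Suc m * N - k))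
               = v m - u m" for m
    unfolding sigma_plus sigma_minus by (simp add: algebra_simps)
  have "u m = \<bar>sigma N r (Suc m * N - k)\<bar>" "v m = \<bar>sigma N r (Suc m * N + k)\<bar>" for m
    unfolding sigma_plus sigma_minus u_def v_def using s_pos by (simp_all add: abs_mult)
  then have "u m \<le> inverse (real (Suc m) ^ 2)" "v m \<le> inverse (real (Suc m) ^ 2)" for m
    using abs_sigma_le[where N = N, OF assms(2) Suc_le_aliased_frequencies(2)[OF N(2), of m]]
      abs_sigma_le[where N = N, OF assms(2) Suc_le_aliased_frequencies(1)[OF N(2), of m]]
    by simp_all
  moreover have "0 \<le> u m" "0 \<le> v m" for m
    unfolding u_def v_def using s_pos by simp_all
  ultimately have "summable u" "summable v"
    by (auto intro!: summable_comparison_test[OF _ summable_inverse_Suc_square])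
  moreover have "u 0 < sigma N r k"
  proof -
    have "s / real (N - k) < s / real k" using s_pos assms by (intro divide_strict_left_mono) auto
    then show ?thesis unfolding sigma_eq_sin_div s_def[symmetric] u_def using s_pos assms
      by (intro power_strict_mono) auto
  qed
  moreover have "u (Suc m) \<le> v m" for m
  proof -
    have le: "real (Suc m * N + k) \<le> real (Suc (Suc m) * N - k)" using assms by simp
    have pos: "0 < real (Suc m * N + k)" using N(1) by (simp only: of_nat_0_less_iff) simp
    have "s / real (Suc (Suc m) * N - k) \<le> s / real (Suc m * N + k)"
      using s_pos by (intro divide_left_mono[OF le] mult_pos_pos[OF order.strict_trans2[OF pos le] pos])
        simp
    then show ?thesis unfolding u_def v_def using s_pos by (intro power_mono) auto
  qed
  ultimately have "0 < sigma N r k + (\<Sum>m. v m - u m)" by (rule suminf_interlaced_pos)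
  then show ?thesis unfolding Hk_def terms .
qed

lemma Hk_pos:
  assumes "l \<in> {0, 1}" "odd (r + l)" "1 \<le> r" "0 < k" "2 * k < N"
  shows "0 < Hk l r N k"
proof (cases "l = 0")
  case True
  then show ?thesis using assms Hk_pos_even_exponent[of r k N] by simp
next
  case False
  then have "l = 1" using assms(1) by simp
  then show ?thesis using assms Hk_pos_odd_exponent[of r k N] by simp
qed

lemma ts_node_eq_phi:
  assumes "1 \<le> r" "2 * q < N" "\<And>k. k \<in> {1..q} \<Longrightarrow> Hk l r N k \<noteq> 0"
  shows "ts l q r N j (node l N i) = phi l q N j (node l N i)"
proof -
  have "Ck l r N j (node l N i) k / Hk l r N k = cos (real k * (node l N i - node l N j))"
    if "k \<in> {1..q}" for k
    using that assms Ck_node[OF assms(1), of k N] by simp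
  then show ?thesis unfolding ts_def phi_def by simp
qed

theorem mainTheorem4:
  fixes N l r q :: nat
  assumes "N \<ge> 3" and "odd N"
    and "l \<in> {0, 1}"
    and "r \<ge> 1" and "odd (r + l)"
    and "q \<le> (N - 1) div 2"
  shows "(\<forall>i\<in>{1..N}. \<forall>j\<in>{1..N}.
            ts l q r N j (node l N i) = phi l q N j (node l N i))
       \<and> (\<forall>f :: nat \<Rightarrow> real. \<forall>i\<in>{1..N}.
            (\<Sum>j = 1..N. f j * ts l q r N j (node l N i))
              = (\<Sum>j = 1..N. f j * phi l q N j (node l N i)))"
proof -
  have "2 * ((N - 1) div 2) \<le> N - 1" by simp
  then have q: "2 * q < N" using assms(1,6) by linarith
  have "Hk l r N k \<noteq> 0" if "k \<in> {1..q}" for k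
    using Hk_pos[OF assms(3,5,4), of k N] that q by simp
  then have "ts l q r N j (node l N i) = phi l q N j (node l N i)" for i j
    using ts_node_eq_phi[OF assms(4) q] by blast
  then show ?thesis by simp
qed

end
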